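(* Consider a fully connected layer $w^i=\phi_i(W_iw^{i-1}+b_i)$ with $W_i\in\mathbb{R}^{n_i\times n_{i-1}}$, $b_i\in\mathbb{R}^{n_i}$ and $\phi_i(\nu)=(\varphi(\nu_1),\dots,\varphi(\nu_{n_i}))^\top$, where $\varphi:\mathbb{R}\to\mathbb{R}$ is slope-restricted on $[0,1]$. Let $Q_i\in\mathbb{S}^{n_i}$, $S_i\in\mathbb{R}^{n_i\times n_{i-1}}$, $R_i\in\mathbb{S}^{n_{i-1}}$. If there exists a positive definite diagonal $\Lambda_i\in\mathbb{R}^{n_i\times n_i}$ such that $$\begin{bmatrix}R_i & S_i^\top-W_i^\top\Lambda_i\\ S_i-\Lambda_iW_i & 2\Lambda_i+Q_i\end{bmatrix}\succeq 0,$$ then for all $w^{i-1}_a,w^{i-1}_b\in\mathbb{R}^{n_{i-1}}$, with $\Delta w^{i}=w^i_a-w^i_b$ and $\Delta w^{i-1}=w^{i-1}_a-w^{i-1}_b$, $${\Delta w^i}^\top Q_i\Delta w^i+2{\Delta w^i}^\top S_i\Delta w^{i-1}+{\Delta w^{i-1}}^\top R_i\Delta w^{i-1}\ge 0.$$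
   Context: $\mathbb{S}^n$ denotes the real symmetric $n\times n$ matrices. A function $\varphi:\mathbb{R}\to\mathbb{R}$ is slope-restricted on $[0,1]$ if $0\le\frac{\varphi(s)-\varphi(t)}{s-t}\le 1$ for all $s\ne t$. *)

theory Defs
  imports "HOL-Analysis.Analysis"
begin

definition slope_restricted_01 :: "(real \<Rightarrow> real) \<Rightarrow> bool" where
  "slope_restricted_01 \<phi> \<longleftrightarrow>
     (\<forall>s t. s \<noteq> t \<longrightarrow> 0 \<le> (\<phi> s - \<phi> t) / (s - t) \<and> (\<phi> s - \<phi> t) / (s - t) \<le> 1)"

definition layer :: "real^'a^'b \<Rightarrow> real^'b \<Rightarrow> (real \<Rightarrow> real) \<Rightarrow> real^'a \<Rightarrow> real^'b" where
  "layer W b \<phi> w = (\<chi> j. \<phi> ((W *v w + b) $ j))"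

definition symmetric_mat :: "real^'n^'n \<Rightarrow> bool" where
  "symmetric_mat M \<longleftrightarrow> transpose M = M"

definition diagonal_mat :: "real^'n^'n \<Rightarrow> bool" where
  "diagonal_mat M \<longleftrightarrow> (\<forall>i j. i \<noteq> j \<longrightarrow> M $ i $ j = 0)"

definition pos_def_mat :: "real^'n^'n \<Rightarrow> bool" where
  "pos_def_mat M \<longleftrightarrow> symmetric_mat M \<and> (\<forall>x. x \<noteq> 0 \<longrightarrow> x \<bullet> (M *v x) > 0)"

definition psd_mat :: "real^'n^'n \<Rightarrow> bool" where
  "psd_mat M \<longleftrightarrow> symmetric_mat M \<and> (\<forall>x. x \<bullet> (M *v x) \<ge> 0)"

definition block_mat :: "real^'a^'a \<Rightarrow> real^'b^'a \<Rightarrow> real^'a^'b \<Rightarrow> real^'b^'b \<Rightarrow> real^('a+'b)^('a+'b)" where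
  "block_mat A B C D = (\<chi> i j. case i of
       Inl p \<Rightarrow> (case j of Inl q \<Rightarrow> A $ p $ q | Inr q \<Rightarrow> B $ p $ q)
     | Inr p \<Rightarrow> (case j of Inl q \<Rightarrow> C $ p $ q | Inr q \<Rightarrow> D $ p $ q))"

end

theory Submission
  imports Defs
begin

text \<open>
  Slope restriction on \<open>[0,1]\<close> places every increment of \<open>\<phi>\<close> in a sector:
  \<open>(\<phi> s - \<phi> t) ((s - t) - (\<phi> s - \<phi> t)) \<ge> 0\<close>.  Summing these sector inequalities over
  the neurons of the layer with the nonnegative weights \<open>\<Lambda>\<^sub>j\<^sub>j\<close> gives
  \<open>u \<bullet> \<Lambda> (W d - u) \<ge> 0\<close> for \<open>u = \<Delta>w\<^sup>i\<close>, \<open>d = \<Delta>w\<^sup>i\<^sup>-\<^sup>1\<close>.  Evaluating the positive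
  semidefinite block matrix at \<open>(d, u)\<close> shows that the target quadratic form is at least
  twice this quantity.
\<close>

lemma sum_UNIV_Plus:
  fixes f :: "'a::finite + 'b::finite \<Rightarrow> 'c::comm_monoid_add"
  shows "sum f UNIV = (\<Sum>p\<in>UNIV. f (Inl p)) + (\<Sum>q\<in>UNIV. f (Inr q))"
proof -
  have "sum f UNIV = sum f (UNIV <+> UNIV)" by simp
  also have "\<dots> = sum (f \<circ> Inl) UNIV + sum (f \<circ> Inr) UNIV" by (rule sum.Plus) auto
  finally show ?thesis by (simp add: o_def)
qed

definition block_vec :: "real^'a \<Rightarrow> real^'b \<Rightarrow> real^('a+'b)" where
  "block_vec x y = (\<chi> i. case i of Inl p \<Rightarrow> x $ p | Inr q \<Rightarrow> y $ q)"

lemma block_vec_nth [simp]: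
  "block_vec x y $ Inl p = x $ p"
  "block_vec x y $ Inr q = y $ q"
  by (simp_all add: block_vec_def)

lemma inner_block_vec: "block_vec x y \<bullet> block_vec x' y' = x \<bullet> x' + y \<bullet> y'"
  by (simp add: inner_vec_def sum_UNIV_Plus)

lemma block_mat_mult_block_vec:
  "block_mat A B C D *v block_vec x y = block_vec (A *v x + B *v y) (C *v x + D *v y)"
  unfolding vec_eq_iff
proof
  fix i :: "'a + 'b"
  show "(block_mat A B C D *v block_vec x y) $ i = block_vec (A *v x + B *v y) (C *v x + D *v y) $ i"
    by (cases i) (simp_all add: matrix_vector_mult_def block_mat_def sum_UNIV_Plus)
qed

lemma inner_transpose_mult:
  fixes A :: "real^'a^'b"
  shows "x \<bullet> (transpose A *v y) = y \<bullet> (A *v x)"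
  by (metis transpose_matrix_vector dot_lmul_matrix inner_commute)

lemma quadratic_form_block_mat:
  fixes C :: "real^'a^'b"
  shows "block_vec x y \<bullet> (block_mat A (transpose C) C D *v block_vec x y)
           = x \<bullet> (A *v x) + 2 * (y \<bullet> (C *v x)) + y \<bullet> (D *v y)"
  by (simp add: block_mat_mult_block_vec inner_block_vec inner_add_right inner_transpose_mult
      del: transpose_matrix_vector)

lemma transpose_diff: "transpose (A - B) = transpose A - transpose (B :: real^'a^'b)"
  by (simp add: transpose_def vec_eq_iff)

lemma diagonal_mat_transpose: "diagonal_mat M \<Longrightarrow> transpose M = M"
  unfolding diagonal_mat_def transpose_def vec_eq_iff by (metis vec_lambda_beta)

lemma diagonal_mat_mult_vec:
  assumes "diagonal_mat M"
  shows "M *v x = (\<chi> j. M $ j $ j * x $ j)"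
proof -
  have "(\<Sum>k\<in>UNIV. M $ j $ k * x $ k) = M $ j $ j * x $ j" for j
    using assms by (subst sum.remove[of UNIV j]) (auto simp: diagonal_mat_def)
  then show ?thesis by (simp add: matrix_vector_mult_def)
qed

lemma pos_def_mat_diag_pos:
  assumes "pos_def_mat M"
  shows "M $ j $ j > 0"
proof -
  have "axis j (1::real) \<noteq> 0" by (simp add: axis_eq_0_iff)
  with assms have "axis j 1 \<bullet> (M *v axis j 1) > 0" by (simp add: pos_def_mat_def)
  then show ?thesis by (simp add: matrix_vector_mult_basis inner_axis' column_def)
qed

lemma slope_restricted_01_sector:
  assumes "slope_restricted_01 \<phi>"
  shows "0 \<le> (\<phi> s - \<phi> t) * ((s - t) - (\<phi> s - \<phi> t))"
proof (cases "s = t")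
  case False
  define r where "r = (\<phi> s - \<phi> t) / (s - t)"
  have r: "0 \<le> r" "r \<le> 1"
    using assms False unfolding slope_restricted_01_def r_def by auto
  have increment: "\<phi> s - \<phi> t = r * (s - t)"
    using False by (simp add: r_def)
  have "(\<phi> s - \<phi> t) * ((s - t) - (\<phi> s - \<phi> t)) = r * (1 - r) * (s - t)\<^sup>2"
    unfolding increment by (simp add: algebra_simps power2_eq_square)
  with r show ?thesis
    by simp
qed simp

lemma layer_diff_sector:
  fixes W :: "real^'a^'b" and b :: "real^'b" and wa wb :: "real^'a"
  assumes "slope_restricted_01 \<phi>"
  defines "u \<equiv> layer W b \<phi> wa - layer W b \<phi> wb"
  shows "0 \<le> u $ j * ((W *v (wa - wb)) $ j - u $ j)"
proof -
  define s where "s = (W *v wa + b) $ j"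
  define t where "t = (W *v wb + b) $ j"
  have "u $ j = \<phi> s - \<phi> t"
    by (simp add: u_def layer_def s_def t_def)
  moreover have "(W *v (wa - wb)) $ j = s - t"
    by (simp add: s_def t_def matrix_vector_mult_diff_distrib)
  ultimately show ?thesis
    using slope_restricted_01_sector[OF assms(1)] by simp
qed

lemma inner_diagonal_mat_nonneg:
  assumes "diagonal_mat M" "\<And>j. 0 \<le> M $ j $ j" "\<And>j. 0 \<le> u $ j * v $ j"
  shows "0 \<le> u \<bullet> (M *v v)"
proof -
  have "u \<bullet> (M *v v) = (\<Sum>j\<in>UNIV. M $ j $ j * (u $ j * v $ j))"
    by (simp add: diagonal_mat_mult_vec[OF assms(1)] inner_vec_def algebra_simps)
  also have "\<dots> \<ge> 0"
    by (simp add: sum_nonneg assms(2,3))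
  finally show ?thesis .
qed

lemma layer_diff_multiplier_nonneg:
  fixes W :: "real^'a^'b" and b :: "real^'b" and wa wb :: "real^'a"
  assumes "slope_restricted_01 \<phi>" "diagonal_mat \<Lambda>" "\<And>j. 0 \<le> \<Lambda> $ j $ j"
  defines "u \<equiv> layer W b \<phi> wa - layer W b \<phi> wb"
  shows "0 \<le> u \<bullet> (\<Lambda> *v (W *v (wa - wb) - u))"
  using assms(2,3) layer_diff_sector[OF assms(1)] unfolding u_def
  by (intro inner_diagonal_mat_nonneg) simp_all

theorem lemma6:
  fixes W :: "real^'a^'b" and b :: "real^'b" and \<phi> :: "real \<Rightarrow> real"
    and Q :: "real^'b^'b" and S :: "real^'a^'b" and R :: "real^'a^'a"
    and \<Lambda> :: "real^'b^'b"
  assumes "slope_restricted_01 \<phi>"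
    and "symmetric_mat Q" and "symmetric_mat R"
    and "diagonal_mat \<Lambda>" and "pos_def_mat \<Lambda>"
    and "psd_mat (block_mat R (transpose S - transpose W ** \<Lambda>) (S - \<Lambda> ** W) (2 *\<^sub>R \<Lambda> + Q))"
  shows "\<forall>wa wb :: real^'a.
           let dwi = layer W b \<phi> wa - layer W b \<phi> wb; dw = wa - wb in
           dwi \<bullet> (Q *v dwi) + 2 * (dwi \<bullet> (S *v dw)) + dw \<bullet> (R *v dw) \<ge> 0"
proof (intro allI)
  fix wa wb :: "real^'a"
  define u where "u = layer W b \<phi> wa - layer W b \<phi> wb"
  define dw where "dw = wa - wb"
  define C where "C = S - \<Lambda> ** W"
  have "transpose C = transpose S - transpose W ** \<Lambda>"
    using assms(4) by (simp add: C_def transpose_diff matrix_transpose_mul diagonal_mat_transpose)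
  then have "0 \<le> block_vec dw u \<bullet> (block_mat R (transpose C) C (2 *\<^sub>R \<Lambda> + Q) *v block_vec dw u)"
    using assms(6) unfolding psd_mat_def C_def by simp
  also have "\<dots> = dw \<bullet> (R *v dw) + 2 * (u \<bullet> (C *v dw)) + u \<bullet> ((2 *\<^sub>R \<Lambda> + Q) *v u)"
    by (rule quadratic_form_block_mat)
  also have "\<dots> = u \<bullet> (Q *v u) + 2 * (u \<bullet> (S *v dw)) + dw \<bullet> (R *v dw)
                    - 2 * (u \<bullet> (\<Lambda> *v (W *v dw - u)))"
    by (simp add: C_def matrix_vector_mult_diff_rdistrib matrix_vector_mult_add_rdistrib
        matrix_vector_mult_diff_distrib matrix_vector_mul_assoc[symmetric]
        scaleR_matrix_vector_assoc[symmetric] inner_diff_right inner_add_right)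
  finally have "2 * (u \<bullet> (\<Lambda> *v (W *v dw - u)))
                  \<le> u \<bullet> (Q *v u) + 2 * (u \<bullet> (S *v dw)) + dw \<bullet> (R *v dw)"
    by simp
  moreover have "0 \<le> u \<bullet> (\<Lambda> *v (W *v dw - u))"
    unfolding u_def dw_def
    using assms(1,4) pos_def_mat_diag_pos[OF assms(5)]
    by (intro layer_diff_multiplier_nonneg) (simp_all add: less_imp_le)
  ultimately show "let dwi = layer W b \<phi> wa - layer W b \<phi> wb; dw = wa - wb in
           dwi \<bullet> (Q *v dwi) + 2 * (dwi \<bullet> (S *v dw)) + dw \<bullet> (R *v dw) \<ge> 0"
    unfolding Let_def u_def[symmetric] dw_def[symmetric] by linarith
qed

end
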